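(* Let $q=r^2$ with $r$ an odd prime power, $\theta$ a primitive element of $\mathbb{F}_q$, and $q-1=e_1f_1=e_2f_2$ with positive integers, where for some integer $l\geq 2$ we have $e_1\equiv 2^l\pmod{2^{l+1}}$ and $2^l\mid e_2$, and moreover $2e_2\mid e_1(r+1)$ and $e_1\mid e_2(r-1)$. Let $A=\langle\theta^{e_1}\rangle$, $B=\langle\theta^{e_2}\rangle$, $\beta=\theta^{e_2}$, $\gamma=\theta^{e_1/2}$, $D_1=\frac{e_1}{\gcd(e_1,e_2)}$, $D_2=\frac{e_2}{\gcd(e_1,e_2)}$. Let $1\leq s\leq D_1$, $1\leq t\leq D_2$, let $i_1,\dots,i_s$ be integers pairwise distinct modulo $D_1$ and $j_1,\dots,j_t$ integers pairwise distinct modulo $D_2$, and set $M=\bigcup_{\mu=1}^s\beta^{i_\mu}A$, $N=\bigcup_{\nu=1}^t\gamma^{2j_\nu+1}B$, $S=M\cup N$. Then $\eta(L_S(b))=(-1)^{\frac{te_1(r+1)}{2e_2}+\frac{t(r+1)}{2}}$ for every $b\in M$, and $\eta(L_S(b))=(-1)^{\frac{(t-1)(r+1)}{2}}$ for every $b\in N$.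
   Context: $\eta$ denotes the quadratic character of $\mathbb{F}_q^*$ ($\eta(x)=1$ if $x$ is a nonzero square, $-1$ otherwise). For a finite set $S\subseteq\mathbb{F}_q$ and $b\in S$, $L_S(b)=\prod_{c\in S,\,c\neq b}(b-c)$. $\langle x\rangle$ denotes the cyclic subgroup of $\mathbb{F}_q^*$ generated by $x$. *)

theory Defs
  imports "HOL-Number_Theory.Number_Theory"
begin

definition eta :: "'a::{finite,field} \<Rightarrow> int" where
  "eta x = (if x = 0 then 0 else if (\<exists>y. y ^ 2 = x) then 1 else -1)"

definition L :: "'a::field set \<Rightarrow> 'a \<Rightarrow> 'a" where
  "L S b = (\<Prod>c\<in>S - {b}. b - c)"

definition cyc :: "'a::field \<Rightarrow> 'a set" where
  "cyc x = {x powi k | k. True}"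

definition primitive_elem :: "'a::{finite,field} \<Rightarrow> bool" where
  "primitive_elem \<theta> \<longleftrightarrow> \<theta> \<noteq> 0 \<and> cyc \<theta> = UNIV - {0}"

end

theory Submission
  imports Defs "HOL-Computational_Algebra.Polynomial"
begin

text \<open>
  Put \<open>h = (q - 1)/2\<close> and \<open>k = (r + 1)/2\<close>, so that \<open>\<eta>(x) = x^h\<close> (Euler's criterion).
  \<open>S\<close> is a disjoint union of cosets \<open>aH\<close> of subgroups \<open>H\<close> of order \<open>f\<close>, and over such a coset
  \<open>\<Prod>(b - c) = b^f - a^f\<close>; if \<open>b \<in> aH\<close>, the product over \<open>c \<noteq> b\<close> is \<open>f b^(f-1)\<close>, the
  derivative of \<open>X^f - a^f\<close> at \<open>b\<close>. All elements of \<open>S\<close> are squares. On the cosets of \<open>A\<close>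
  the \<open>f\<^sub>1\<close>-th powers lie in \<open>\<bbbF>\<^sub>r\<close>, whose nonzero elements are squares in \<open>\<bbbF>\<^sub>q\<close>, so these
  cosets contribute nothing. On the cosets of \<open>B\<close> the \<open>f\<^sub>2\<close>-th powers \<open>u, v\<close> have norm
  \<open>u^(r+1) = v^(r+1) = 1\<close>; for \<open>w = u/v\<close> Frobenius gives \<open>(w - 1)^r w = -(w - 1)\<close>, whence
  \<open>(u - v)^h u^k = (-1)^k v^k\<close>. Finally \<open>x^(f\<^sub>2 k)\<close> is \<open>1\<close> on \<open>M\<close> and \<open>(-1)^d\<close> on \<open>N\<close>,
  where \<open>d = e\<^sub>1(r + 1)/(2e\<^sub>2)\<close>.
\<close>

lemma prod_linear_factors_eq_binomial:
  fixes S :: "'a::field set"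
  assumes fin: "finite S" and card: "card S = f" and f_pos: "f > 0"
    and roots: "\<And>c. c \<in> S \<Longrightarrow> c ^ f = z"
  shows "(\<Prod>c\<in>S. [:-c, 1:]) = monom 1 f - [:z:]"
proof (rule ccontr)
  define P where "P = (\<Prod>c\<in>S. [:-c, 1:])"
  define D where "D = monom 1 f - [:z:] - P"
  assume "P \<noteq> monom 1 f - [:z:]"
  hence D_nz: "D \<noteq> 0" unfolding D_def P_def by simp
  have deg_P: "degree P = f" unfolding P_def using card by (subst degree_prod_sum_eq) auto
  have lc_P: "coeff P f = 1" using lead_coeff_prod[of "\<lambda>c. [:-c, 1:]" S] deg_P unfolding P_def by simp
  have "coeff D i = 0" if "i \<ge> f" for i
    using that f_pos lc_P coeff_eq_0[of P i] deg_P
    unfolding D_def by (cases "i = f") (auto simp: coeff_pCons split: nat.split)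
  hence "degree D \<le> f - 1" by (intro degree_le) auto
  hence deg_D: "degree D < f" using f_pos by linarith
  have "S \<subseteq> {x. poly D x = 0}"
  proof
    fix x assume "x \<in> S"
    hence "poly P x = 0" unfolding P_def poly_prod using fin by (auto intro: prod_zero)
    thus "x \<in> {x. poly D x = 0}" using roots \<open>x \<in> S\<close> unfolding D_def by (simp add: poly_monom)
  qed
  hence "card S \<le> card {x. poly D x = 0}"
    using poly_roots_finite[OF D_nz] by (intro card_mono) auto
  also have "\<dots> \<le> degree D" by (rule card_poly_roots_bound[OF D_nz])
  finally show False using deg_D card by simp
qed

lemma poly_pderiv_prod_linear_factors:
  fixes S :: "'a::idom set"
  assumes "finite S" "b \<in> S"
  shows "poly (pderiv (\<Prod>c\<in>S. [:-c, 1:])) b = (\<Prod>c\<in>S - {b}. b - c)"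
proof -
  have "poly (pderiv (\<Prod>c\<in>S. [:-c, 1:])) b = (\<Sum>a\<in>S. \<Prod>c\<in>S - {a}. b - c)"
    by (simp add: pderiv_prod poly_sum poly_prod pderiv_pCons)
  also have "\<dots> = (\<Prod>c\<in>S - {b}. b - c) + (\<Sum>a\<in>S - {b}. \<Prod>c\<in>S - {a}. b - c)"
    using assms by (simp add: sum.remove)
  also have "(\<Sum>a\<in>S - {b}. \<Prod>c\<in>S - {a}. b - c) = 0"
    using assms by (intro sum.neutral ballI prod_zero) auto
  finally show ?thesis by simp
qed

lemma prod_diff_eq_binomial:
  fixes S :: "'a::field set"
  assumes "finite S" "card S = f" "f > 0" "\<And>c. c \<in> S \<Longrightarrow> c ^ f = z"
  shows "(\<Prod>c\<in>S. y - c) = y ^ f - z"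
  using arg_cong[OF prod_linear_factors_eq_binomial[OF assms], of "\<lambda>p. poly p y"]
  by (simp add: poly_prod poly_monom)

lemma prod_diff_remove_eq_binomial_deriv:
  fixes S :: "'a::field set"
  assumes "finite S" "card S = f" "f > 0" "\<And>c. c \<in> S \<Longrightarrow> c ^ f = z" "b \<in> S"
  shows "(\<Prod>c\<in>S - {b}. b - c) = of_nat f * b ^ (f - 1)"
  using arg_cong[OF prod_linear_factors_eq_binomial[OF assms(1-4)], of "\<lambda>p. poly (pderiv p) b"]
  by (simp add: poly_pderiv_prod_linear_factors[OF assms(1,5)] pderiv_diff pderiv_monom poly_monom)

lemma div_gcd_dvd_of_dvd_mult:
  fixes a b :: nat and x :: int
  assumes "a > 0" "int a dvd int b * x"
  shows "int (a div gcd a b) dvd x"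
proof -
  define g where "g = gcd a b"
  have "g > 0" unfolding g_def using assms(1) by simp
  have a: "a = g * (a div g)" and b: "b = g * (b div g)" unfolding g_def by simp_all
  have "int g * int (a div g) dvd int g * (int (b div g) * x)"
    using assms(2) a b by (metis of_nat_mult mult.assoc)
  hence "int (a div g) dvd int (b div g) * x" using \<open>g > 0\<close> by simp
  moreover have "coprime (a div g) (b div g)" unfolding g_def using assms(1) by (simp add: div_gcd_coprime)
  hence "coprime (int (a div g)) (int (b div g))" by simp
  ultimately show ?thesis unfolding g_def using coprime_dvd_mult_right_iff by blast
qed

lemma one_mem_cyc: "1 \<in> cyc x"
  unfolding cyc_def by (metis (mono_tags) mem_Collect_eq power_int_0_right)

lemma finite_field_power_card_minus_one:
  fixes x :: "'a::{finite,field}"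
  assumes "x \<noteq> 0"
  shows "x ^ (card (UNIV :: 'a set) - 1) = 1"
proof -
  let ?U = "UNIV - {0::'a}"
  have "(\<Prod>y\<in>?U. x * y) = (\<Prod>y\<in>?U. y)"
    by (rule prod.reindex_bij_witness[of _ "\<lambda>y. y / x" "\<lambda>y. x * y"]) (use assms in auto)
  moreover have "(\<Prod>y\<in>?U. x * y) = x ^ card ?U * (\<Prod>y\<in>?U. y)"
    by (simp add: prod.distrib)
  moreover have "(\<Prod>y\<in>?U. y) \<noteq> 0" by (simp add: prod_zero_iff)
  ultimately show ?thesis by (simp add: card_Diff_singleton)
qed

lemma CHAR_eq_of_card_eq_prime_power:
  assumes "card (UNIV :: 'a::{finite,field} set) = p ^ n" "prime p" "n > 0"
  shows "CHAR('a) = p"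
proof -
  have prime_char: "prime CHAR('a)"
    by (rule prime_CHAR_semidom, rule finite_imp_CHAR_pos) simp
  have "CHAR('a) dvd p ^ n" using CHAR_dvd_CARD[where 'a='a] assms(1) by simp
  hence "CHAR('a) dvd p" using prime_char prime_dvd_power by blast
  thus ?thesis using prime_char assms(2) primes_dvd_imp_eq by blast
qed

lemma Frobenius_power_diff:
  fixes x y :: "'a::comm_ring_1"
  assumes "prime CHAR('a)" "r = CHAR('a) ^ k" "odd r"
  shows "(x - y) ^ r = x ^ r - y ^ r"
  using freshmans_dream'[OF assms(1,2), of x "-y"] assms(3) by (simp add: power_minus_odd)

lemma Frobenius_power_of_nat:
  assumes "prime CHAR('a::comm_semiring_1)" "r = CHAR('a) ^ k"
  shows "(of_nat n :: 'a) ^ r = of_nat n"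
proof (induction n)
  case 0 thus ?case using assms by (simp add: power_0_left)
next
  case (Suc n) thus ?case using freshmans_dream'[OF assms] by (simp only: of_nat_Suc) simp
qed

locale primitive_root_field =
  fixes \<theta> :: "'a::{finite,field}"
  assumes primitive: "primitive_elem \<theta>"
begin

definition Q :: nat where "Q = card (UNIV :: 'a set) - 1"

lemma primitive_nonzero: "\<theta> \<noteq> 0"
  using primitive unfolding primitive_elem_def by simp

lemma Q_pos: "Q > 0"
proof -
  have "card {0::'a, 1} \<le> card (UNIV :: 'a set)" by (intro card_mono) auto
  thus ?thesis unfolding Q_def by simp
qed

lemma power_Q: "\<theta> ^ Q = 1"
  unfolding Q_def by (rule finite_field_power_card_minus_one[OF primitive_nonzero])

lemma power_int_mod_Q: "\<theta> powi z = \<theta> ^ nat (z mod int Q)"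
proof -
  have "\<theta> powi z = (\<theta> ^ Q) powi (z div int Q) * \<theta> powi (z mod int Q)"
    using primitive_nonzero by (simp add: power_int_power flip: power_int_add)
  thus ?thesis using Q_pos by (simp add: power_Q power_int_def)
qed

lemma nonzero_eq_power_int: "x \<noteq> 0 \<Longrightarrow> \<exists>z. x = \<theta> powi z"
  using primitive unfolding primitive_elem_def cyc_def by auto

lemma powers_below_Q: "(\<lambda>n. \<theta> ^ n) ` {..<Q} = UNIV - {0}"
proof
  show "UNIV - {0} \<subseteq> (\<lambda>n. \<theta> ^ n) ` {..<Q}"
  proof
    fix x :: 'a assume "x \<in> UNIV - {0}"
    then obtain z where "x = \<theta> powi z" using nonzero_eq_power_int by blast
    hence "x = \<theta> ^ nat (z mod int Q)" by (simp add: power_int_mod_Q)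
    moreover have "nat (z mod int Q) < Q" using Q_pos by (simp add: nat_less_iff)
    ultimately show "x \<in> (\<lambda>n. \<theta> ^ n) ` {..<Q}" by blast
  qed
qed (use primitive_nonzero in auto)

lemma inj_on_powers_below_Q: "inj_on (\<lambda>n. \<theta> ^ n) {..<Q}"
proof (rule eq_card_imp_inj_on)
  show "card ((\<lambda>n. \<theta> ^ n) ` {..<Q}) = card {..<Q}"
    unfolding powers_below_Q by (simp add: card_Diff_singleton Q_def)
qed simp

lemma power_int_eq_1_iff: "\<theta> powi z = 1 \<longleftrightarrow> int Q dvd z"
proof
  assume "\<theta> powi z = 1"
  hence "\<theta> ^ nat (z mod int Q) = \<theta> ^ 0" by (simp add: power_int_mod_Q)
  hence "nat (z mod int Q) = 0"
    by (rule inj_onD[OF inj_on_powers_below_Q]) (use Q_pos in \<open>auto simp: nat_less_iff\<close>)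
  moreover have "z mod int Q \<ge> 0" using Q_pos by simp
  ultimately show "int Q dvd z" by (simp add: dvd_eq_mod_eq_0)
qed (auto simp: power_int_power' power_Q simp flip: power_int_power)

lemma power_int_eq_iff: "\<theta> powi a = \<theta> powi b \<longleftrightarrow> int Q dvd a - b"
  using primitive_nonzero by (simp add: power_int_diff flip: power_int_eq_1_iff)

lemma power_eq_1_if_mem_cyc:
  assumes "x \<in> cyc (\<theta> ^ e)" "Q dvd e * n"
  shows "x ^ n = 1"
proof -
  obtain k where "x = (\<theta> ^ e) powi k" using assms(1) unfolding cyc_def by auto
  hence "x ^ n = \<theta> powi (int (e * n) * k)" by (simp add: power_int_power power_int_power' mult_ac)
  moreover have "int Q dvd int (e * n) * k" using assms(2) by (simp only: int_dvd_int_iff dvd_mult2)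
  ultimately show ?thesis by (simp only: power_int_eq_1_iff)
qed

lemma cyc_eq_powers:
  assumes "e dvd Q"
  shows "cyc (\<theta> ^ e) = (\<lambda>m. \<theta> ^ (e * m)) ` {..<Q div e}"
proof
  define f where "f = Q div e"
  have Q_eq: "Q = e * f" unfolding f_def using assms by simp
  hence "f > 0" using Q_pos by auto
  show "cyc (\<theta> ^ e) \<subseteq> (\<lambda>m. \<theta> ^ (e * m)) ` {..<Q div e}"
  proof
    fix x assume "x \<in> cyc (\<theta> ^ e)"
    then obtain k where "x = (\<theta> ^ e) powi k" unfolding cyc_def by blast
    also have "\<dots> = \<theta> ^ nat ((int e * k) mod (int e * int f))"
      by (simp only: power_int_power power_int_mod_Q Q_eq of_nat_mult)
    also have "(int e * k) mod (int e * int f) = int (e * nat (k mod int f))"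
      using \<open>f > 0\<close> by (simp flip: mult_mod_right)
    also have "nat (int (e * nat (k mod int f))) = e * nat (k mod int f)" by (rule nat_int)
    finally show "x \<in> (\<lambda>m. \<theta> ^ (e * m)) ` {..<Q div e}"
      using \<open>f > 0\<close> unfolding f_def[symmetric]
      by (intro rev_image_eqI[of "nat (k mod int f)"]) (simp_all add: nat_less_iff)
  qed
  show "(\<lambda>m. \<theta> ^ (e * m)) ` {..<Q div e} \<subseteq> cyc (\<theta> ^ e)"
  proof
    fix x assume "x \<in> (\<lambda>m. \<theta> ^ (e * m)) ` {..<Q div e}"
    then obtain m where "x = (\<theta> ^ e) powi int m" by (auto simp: power_mult)
    thus "x \<in> cyc (\<theta> ^ e)" unfolding cyc_def by blast
  qed
qed

lemma card_cyc:
  assumes "e dvd Q"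
  shows "card (cyc (\<theta> ^ e)) = Q div e"
proof -
  have "e > 0" using assms Q_pos by (auto intro: gr0I)
  have "(\<lambda>m. e * m) ` {..<Q div e} \<subseteq> {..<Q}"
    using assms \<open>e > 0\<close> by (auto elim!: dvdE)
  hence "inj_on (\<lambda>n. \<theta> ^ n) ((\<lambda>m. e * m) ` {..<Q div e})"
    using inj_on_powers_below_Q inj_on_subset by blast
  moreover have "inj_on (\<lambda>m. e * m) {..<Q div e}" using \<open>e > 0\<close> by (simp add: inj_on_def)
  ultimately have "inj_on (\<lambda>m. \<theta> ^ (e * m)) {..<Q div e}"
    using comp_inj_on[of "\<lambda>m. e * m"] by (simp add: comp_def)
  thus ?thesis unfolding cyc_eq_powers[OF assms] by (simp add: card_image)
qed

lemma prod_diff_coset_cyc: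
  assumes "a \<noteq> 0" "e dvd Q"
  shows "(\<Prod>c\<in>(\<lambda>y. a * y) ` cyc (\<theta> ^ e). b - c) = b ^ (Q div e) - a ^ (Q div e)"
    and "b \<in> (\<lambda>y. a * y) ` cyc (\<theta> ^ e) \<Longrightarrow>
           (\<Prod>c\<in>(\<lambda>y. a * y) ` cyc (\<theta> ^ e) - {b}. b - c) = of_nat (Q div e) * b ^ (Q div e - 1)"
proof -
  let ?S = "(\<lambda>y. a * y) ` cyc (\<theta> ^ e)"
  have card: "card ?S = Q div e"
    using assms by (simp add: card_image inj_on_def card_cyc)
  have pos: "Q div e > 0" using assms(2) Q_pos by (auto elim: dvdE)
  have roots: "c ^ (Q div e) = a ^ (Q div e)" if "c \<in> ?S" for c
  proof -
    obtain y where "y \<in> cyc (\<theta> ^ e)" "c = a * y" using \<open>c \<in> ?S\<close> by auto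
    moreover have "Q dvd e * (Q div e)" using assms(2) by simp
    ultimately show ?thesis by (simp add: power_mult_distrib power_eq_1_if_mem_cyc)
  qed
  show "(\<Prod>c\<in>?S. b - c) = b ^ (Q div e) - a ^ (Q div e)"
    by (rule prod_diff_eq_binomial[OF _ card pos roots]) simp_all
  show "b \<in> ?S \<Longrightarrow> (\<Prod>c\<in>?S - {b}. b - c) = of_nat (Q div e) * b ^ (Q div e - 1)"
    by (rule prod_diff_remove_eq_binomial_deriv[OF _ card pos roots]) simp_all
qed

lemma power_half_Q_neq_1:
  assumes "even Q"
  shows "\<theta> ^ (Q div 2) \<noteq> 1"
proof
  assume "\<theta> ^ (Q div 2) = 1"
  hence "\<theta> ^ (Q div 2) = \<theta> ^ 0" by simp
  hence "Q div 2 = 0" by (rule inj_onD[OF inj_on_powers_below_Q]) (use Q_pos in auto)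
  thus False using assms Q_pos by auto
qed

lemma power_half_Q:
  assumes "even Q"
  shows "\<theta> ^ (Q div 2) = -1"
proof -
  have "Q div 2 + Q div 2 = Q" using assms by presburger
  hence "(\<theta> ^ (Q div 2) - 1) * (\<theta> ^ (Q div 2) + 1) = 0"
    using power_Q by (simp add: algebra_simps flip: power_add)
  thus ?thesis using power_half_Q_neq_1[OF assms] by (simp add: eq_neg_iff_add_eq_0)
qed

lemma not_square_power_int_odd:
  assumes "even Q" "odd z"
  shows "\<nexists>y. y ^ 2 = \<theta> powi z"
proof
  assume "\<exists>y. y ^ 2 = \<theta> powi z"
  then obtain y where y: "y ^ 2 = \<theta> powi z" by blast
  hence "y \<noteq> 0" using primitive_nonzero by auto
  then obtain w where "y = \<theta> powi w" using nonzero_eq_power_int by blast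
  hence "\<theta> powi (w * 2) = \<theta> powi z" using y by (simp add: power_int_power')
  hence "int Q dvd w * 2 - z" by (simp only: power_int_eq_iff)
  moreover have "(2::int) dvd int Q" using assms(1) by simp
  ultimately have "even (w * 2 - z)" using dvd_trans by blast
  thus False using assms(2) by simp
qed

lemma eta_eq_power_half:
  fixes x :: 'a
  assumes "even Q" "x \<noteq> 0"
  shows "of_int (eta x) = x ^ (Q div 2)"
proof -
  obtain z where x: "x = \<theta> powi z" using nonzero_eq_power_int[OF assms(2)] by blast
  have x_half: "x ^ (Q div 2) = \<theta> powi (z * int (Q div 2))"
    unfolding x by (rule power_int_power')
  have Q_half: "int Q = 2 * int (Q div 2)" using assms(1) by presburger
  show ?thesis
  proof (cases "even z")
    case True
    then obtain w where w: "z = 2 * w" by blast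
    have "x = (\<theta> powi w) ^ 2" unfolding x w by (simp add: power_int_power' mult.commute)
    hence "eta x = 1" using assms(2) unfolding eta_def by auto
    moreover have "z * int (Q div 2) = int Q * w" unfolding w Q_half by (simp only: mult_ac)
    ultimately show ?thesis using x_half by (simp add: power_int_eq_1_iff)
  next
    case False
    hence "eta x = -1"
      using not_square_power_int_odd[OF assms(1)] assms(2) unfolding eta_def x by simp
    moreover obtain w where w: "z = 2 * w + 1" using False by (metis oddE)
    have "z * int (Q div 2) - int (Q div 2) = int Q * w"
      unfolding w Q_half by (simp add: algebra_simps)
    hence "x ^ (Q div 2) = \<theta> ^ (Q div 2)"
      unfolding x_half by (simp add: power_int_eq_iff flip: power_int_of_nat)
    ultimately show ?thesis using power_half_Q[OF assms(1)] by simp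
  qed
qed

lemma eta_eq_neg_one_power:
  fixes x :: 'a
  assumes "even Q" "x ^ (Q div 2) = (-1) ^ n"
  shows "eta x = (-1) ^ n"
proof -
  have "(-1::'a) \<noteq> 1" using power_half_Q power_half_Q_neq_1 assms(1) by metis
  have "x \<noteq> 0" using assms Q_pos by (auto simp: power_0_left)
  hence "of_int (eta x) = (of_int ((-1) ^ n) :: 'a)"
    using eta_eq_power_half[OF assms(1)] assms(2) by simp
  moreover have "eta x \<in> {1, -1}" using \<open>x \<noteq> 0\<close> unfolding eta_def by auto
  ultimately show ?thesis using \<open>(-1::'a) \<noteq> 1\<close> \<open>(-1::'a) \<noteq> 1\<close>[symmetric]
    by (cases "even n") auto
qed

end

locale primitive_root_quadratic_field = primitive_root_field \<theta> for \<theta> :: "'a::{finite,field}" +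
  fixes r :: nat
  assumes card_eq: "card (UNIV :: 'a set) = r ^ 2"
    and odd_r: "odd r"
    and prime_power_r: "\<exists>p k. prime p \<and> 0 < k \<and> r = p ^ k"
begin

lemma CHAR_prime_power: "prime CHAR('a)" "\<exists>k. r = CHAR('a) ^ k"
proof -
  obtain p k where pk: "prime p" "0 < k" "r = p ^ k" using prime_power_r by blast
  have "card (UNIV :: 'a set) = p ^ (k * 2)" using card_eq pk(3) by (simp add: power_mult)
  hence "CHAR('a) = p" by (rule CHAR_eq_of_card_eq_prime_power) (use pk in simp_all)
  thus "prime CHAR('a)" "\<exists>k. r = CHAR('a) ^ k" using pk by auto
qed

lemma r_ge_3: "r \<ge> 3"
proof -
  obtain p k where "prime p" "0 < k" "r = p ^ k" using prime_power_r by blast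
  hence "r \<ge> p" using self_le_power[OF prime_ge_1_nat] by simp
  hence "r \<ge> 2" using prime_ge_2_nat[OF \<open>prime p\<close>] by linarith
  thus ?thesis using odd_r by presburger
qed

lemma Q_eq: "Q = (r - 1) * (r + 1)"
  unfolding Q_def card_eq using r_ge_3 by (simp add: power2_eq_square algebra_simps)

lemma even_Q: "even Q"
  using Q_eq odd_r r_ge_3 by simp

lemma Q_dvd_even_mult_half_Q: "even e \<Longrightarrow> Q dvd e * (Q div 2)"
  using even_Q by (auto elim!: evenE simp: mult_ac)

lemma half_Q_eq: "Q div 2 = (r - 1) * ((r + 1) div 2)" "Q div 2 = (r + 1) * ((r - 1) div 2)"
  unfolding Q_eq using odd_r by (auto elim!: oddE simp: algebra_simps)

lemma power_r_diff: "(x - y :: 'a) ^ r = x ^ r - y ^ r"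
proof -
  obtain k where "r = CHAR('a) ^ k" using CHAR_prime_power(2) by blast
  thus ?thesis using Frobenius_power_diff[OF CHAR_prime_power(1)] odd_r by blast
qed

lemma power_r_of_nat: "(of_nat n :: 'a) ^ r = of_nat n"
proof -
  obtain k where "r = CHAR('a) ^ k" using CHAR_prime_power(2) by blast
  thus ?thesis using Frobenius_power_of_nat[OF CHAR_prime_power(1)] by blast
qed

lemma of_nat_nonzero_if_dvd_Q: "f dvd Q \<Longrightarrow> (of_nat f :: 'a) \<noteq> 0"
proof
  assume f: "f dvd Q" and "(of_nat f :: 'a) = 0"
  hence "CHAR('a) dvd Q" using of_nat_eq_0_iff_char_dvd dvd_trans by blast
  moreover have "CHAR('a) dvd Q + 1" using CHAR_dvd_CARD[where 'a='a] Q_pos unfolding Q_def by simp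
  ultimately have "CHAR('a) dvd 1" by (metis dvd_add_right_iff)
  thus False using CHAR_prime_power(1) by simp
qed

lemma power_half_eq_1_if_power_r:
  fixes x :: 'a
  assumes "x \<noteq> 0" "x ^ r = x"
  shows "x ^ (Q div 2) = 1"
proof -
  have "x ^ (r - 1) * x = 1 * x" using assms(2) power_minus_mult[of r x] r_ge_3 by simp
  hence "x ^ (r - 1) = 1" using assms(1) by simp
  thus ?thesis by (simp add: half_Q_eq(1) power_mult)
qed

lemma power_half_eq_1_if_norm_1:
  fixes x :: 'a
  assumes "x ^ (r + 1) = 1"
  shows "x ^ (Q div 2) = 1"
  by (simp only: half_Q_eq(2) power_mult assms power_one)

lemma power_half_diff_norm_1:
  fixes u v :: 'a
  assumes u: "u ^ (r + 1) = 1" and v: "v ^ (r + 1) = 1" and "u \<noteq> v"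
  shows "(u - v) ^ (Q div 2) * u ^ ((r + 1) div 2) = (-1) ^ ((r + 1) div 2) * v ^ ((r + 1) div 2)"
proof -
  have "v \<noteq> 0" using v by auto
  define w where "w = u / v"
  have w_norm: "w ^ r * w = 1" unfolding w_def using u v by (simp flip: power_Suc2 add: power_divide)
  have "w \<noteq> 1" unfolding w_def using \<open>u \<noteq> v\<close> \<open>v \<noteq> 0\<close> by simp
  have "((w - 1) ^ (r - 1) * w) * (w - 1) = (w - 1) ^ r * w"
    using r_ge_3 power_minus_mult[of r "w - 1"] by (simp add: mult_ac)
  also have "\<dots> = (-1) * (w - 1)"
    using w_norm by (simp add: power_r_diff algebra_simps)
  finally have "((w - 1) ^ (r - 1) * w) * (w - 1) = (-1) * (w - 1)" .
  hence "(w - 1) ^ (r - 1) * w = -1" using \<open>w \<noteq> 1\<close> by (subst (asm) mult_right_cancel) auto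
  hence "(w - 1) ^ (Q div 2) * w ^ ((r + 1) div 2) = (-1) ^ ((r + 1) div 2)"
    unfolding half_Q_eq(1) by (metis power_mult power_mult_distrib)
  moreover have "(u - v) ^ (Q div 2) = (w - 1) ^ (Q div 2)"
  proof -
    have "u - v = v * (w - 1)" unfolding w_def using \<open>v \<noteq> 0\<close> by (simp add: field_simps)
    thus ?thesis using power_half_eq_1_if_norm_1[OF v] by (simp add: power_mult_distrib)
  qed
  moreover have "u ^ ((r + 1) div 2) = w ^ ((r + 1) div 2) * v ^ ((r + 1) div 2)"
    unfolding w_def using \<open>v \<noteq> 0\<close> by (simp add: power_divide)
  ultimately show ?thesis by (metis mult.assoc)
qed

lemma power_half_prod_diff_remove_coset:
  assumes "a \<noteq> 0" "e dvd Q" "b \<in> (\<lambda>y. a * y) ` cyc (\<theta> ^ e)" "b ^ (Q div 2) = 1"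
  shows "(\<Prod>c\<in>(\<lambda>y. a * y) ` cyc (\<theta> ^ e) - {b}. b - c) ^ (Q div 2) = 1"
proof -
  have "Q div e dvd Q" using assms(2) by (metis dvd_div_mult_self dvd_triv_left)
  hence "(of_nat (Q div e) :: 'a) ^ (Q div 2) = 1"
    by (intro power_half_eq_1_if_power_r of_nat_nonzero_if_dvd_Q power_r_of_nat)
  moreover have "(b ^ (Q div e - 1)) ^ (Q div 2) = 1"
    using assms(4) by (metis power_mult power_one mult.commute)
  ultimately show ?thesis
    unfolding prod_diff_coset_cyc(2)[OF assms(1-3)] by (simp add: power_mult_distrib)
qed

end

locale coset_union_setting = primitive_root_quadratic_field \<theta> r for \<theta> :: "'a::{finite,field}" and r +
  fixes e1 f1 e2 f2 l s t :: nat and i j :: "nat \<Rightarrow> int"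
  assumes fact1: "card (UNIV :: 'a set) - 1 = e1 * f1"
    and fact2: "card (UNIV :: 'a set) - 1 = e2 * f2"
    and l_ge: "2 \<le> l"
    and e1_cong: "[e1 = 2 ^ l] (mod 2 ^ (l + 1))"
    and e2_div: "2 ^ l dvd e2"
    and div1: "2 * e2 dvd e1 * (r + 1)"
    and div2: "e1 dvd e2 * (r - 1)"
    and i_dist: "\<forall>\<mu>\<in>{1..s}. \<forall>\<mu>'\<in>{1..s}. \<mu> \<noteq> \<mu>' \<longrightarrow>
                   \<not> [i \<mu> = i \<mu>'] (mod int (e1 div gcd e1 e2))"
    and j_dist: "\<forall>\<nu>\<in>{1..t}. \<forall>\<nu>'\<in>{1..t}. \<nu> \<noteq> \<nu>' \<longrightarrow>
                   \<not> [j \<nu> = j \<nu>'] (mod int (e2 div gcd e1 e2))"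
begin

definition Mcoset :: "nat \<Rightarrow> 'a set" where
  "Mcoset \<mu> = (\<lambda>a. (\<theta> ^ e2) powi (i \<mu>) * a) ` cyc (\<theta> ^ e1)"

definition Ncoset :: "nat \<Rightarrow> 'a set" where
  "Ncoset \<nu> = (\<lambda>b. (\<theta> ^ (e1 div 2)) powi (2 * j \<nu> + 1) * b) ` cyc (\<theta> ^ e2)"

definition Mset :: "'a set" where "Mset = (\<Union>\<mu>\<in>{1..s}. Mcoset \<mu>)"

definition Nset :: "'a set" where "Nset = (\<Union>\<nu>\<in>{1..t}. Ncoset \<nu>)"

definition d :: nat where "d = e1 * (r + 1) div (2 * e2)"

lemma Q_eq_e1_f1: "Q = e1 * f1" and Q_eq_e2_f2: "Q = e2 * f2"
  using fact1 fact2 unfolding Q_def by simp_all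

lemma e1_pos: "e1 > 0"
  using Q_pos unfolding Q_eq_e1_f1 by simp

lemma e2_pos: "e2 > 0"
  using Q_pos unfolding Q_eq_e2_f2 by simp

lemma e1_dvd_Q: "e1 dvd Q"
  unfolding Q_eq_e1_f1 by simp

lemma e2_dvd_Q: "e2 dvd Q"
  unfolding Q_eq_e2_f2 by simp

lemma f1_eq: "f1 = Q div e1"
  using e1_pos unfolding Q_eq_e1_f1 by simp

lemma f2_eq: "f2 = Q div e2"
  using e2_pos unfolding Q_eq_e2_f2 by simp

lemma e2_d_eq: "e2 * d = e1 * ((r + 1) div 2)"
proof -
  have "2 * (e2 * d) = 2 * (e1 * ((r + 1) div 2))"
    using div1 odd_r unfolding d_def by (auto elim!: oddE simp: algebra_simps)
  thus ?thesis by simp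
qed

lemma e1_mult_f2_half_eq: "e1 * (f2 * ((r + 1) div 2)) = Q * d"
proof -
  have "e1 * (f2 * ((r + 1) div 2)) = f2 * (e1 * ((r + 1) div 2))" by (simp only: mult_ac)
  also have "\<dots> = (e2 * f2) * d" by (simp only: e2_d_eq[symmetric] mult_ac)
  also have "\<dots> = Q * d" by (simp only: Q_eq_e2_f2)
  finally show ?thesis .
qed

lemma two_pow_l_dvd_e1: "2 ^ l dvd e1"
proof -
  have "[e1 = 2 ^ l] (mod 2 ^ l)" by (rule cong_dvd_modulus_nat[OF e1_cong]) (simp add: le_imp_power_dvd)
  thus ?thesis using cong_dvd_iff by fastforce
qed

lemma four_dvd_e1: "4 dvd e1" and four_dvd_e2: "4 dvd e2"
proof -
  have "(4::nat) dvd 2 ^ l" using le_imp_power_dvd[OF l_ge, of "2::nat"] by simp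
  thus "4 dvd e1" "4 dvd e2" using two_pow_l_dvd_e1 e2_div dvd_trans by blast+
qed

lemma not_two_pow_l_dvd_half_e1: "\<not> 2 ^ l dvd e1 div 2"
proof
  assume "2 ^ l dvd e1 div 2"
  hence "2 ^ (l + 1) dvd e1" using four_dvd_e1 by (auto elim!: dvdE)
  hence "2 ^ (l + 1) dvd (2::nat) ^ l" using cong_dvd_iff[OF e1_cong] by blast
  thus False by (simp add: power_le_dvd)
qed

lemma Mcoset_representative: "(\<theta> ^ e2) powi (i \<mu>) \<in> Mcoset \<mu>"
  using one_mem_cyc unfolding Mcoset_def by (rule rev_image_eqI) simp

lemma Ncoset_representative: "(\<theta> ^ (e1 div 2)) powi (2 * j \<nu> + 1) \<in> Ncoset \<nu>"
  using one_mem_cyc unfolding Ncoset_def by (rule rev_image_eqI) simp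

lemma mem_Mcoset_exponent: "x \<in> Mcoset \<mu> \<Longrightarrow> \<exists>k. x = \<theta> powi (int e2 * i \<mu> + int e1 * k)"
  unfolding Mcoset_def cyc_def using primitive_nonzero by (auto simp: power_int_power power_int_add)

lemma mem_Ncoset_exponent:
  "x \<in> Ncoset \<nu> \<Longrightarrow> \<exists>k. x = \<theta> powi (int (e1 div 2) * (2 * j \<nu> + 1) + int e2 * k)"
  unfolding Ncoset_def cyc_def using primitive_nonzero by (auto simp: power_int_power power_int_add)

lemma Mcoset_disjoint:
  assumes "\<mu> \<in> {1..s}" "\<mu>' \<in> {1..s}" "\<mu> \<noteq> \<mu>'"
  shows "Mcoset \<mu> \<inter> Mcoset \<mu>' = {}"
proof (rule ccontr)
  assume "Mcoset \<mu> \<inter> Mcoset \<mu>' \<noteq> {}"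
  then obtain k k' where "\<theta> powi (int e2 * i \<mu> + int e1 * k) = \<theta> powi (int e2 * i \<mu>' + int e1 * k')"
    using mem_Mcoset_exponent by (metis disjoint_iff)
  hence "int Q dvd int e2 * (i \<mu> - i \<mu>') + int e1 * (k - k')"
    unfolding power_int_eq_iff by (simp add: algebra_simps)
  moreover have "int e1 dvd int Q" using e1_dvd_Q by simp
  ultimately have "int e1 dvd int e2 * (i \<mu> - i \<mu>') + int e1 * (k - k')" by (rule dvd_trans[rotated])
  hence "int e1 dvd int e2 * (i \<mu> - i \<mu>')" by (simp add: dvd_add_left_iff)
  hence "int (e1 div gcd e1 e2) dvd i \<mu> - i \<mu>'" using div_gcd_dvd_of_dvd_mult e1_pos by blast
  thus False using i_dist assms by (simp add: cong_iff_dvd_diff)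
qed

lemma Ncoset_disjoint:
  assumes "\<nu> \<in> {1..t}" "\<nu>' \<in> {1..t}" "\<nu> \<noteq> \<nu>'"
  shows "Ncoset \<nu> \<inter> Ncoset \<nu>' = {}"
proof (rule ccontr)
  assume "Ncoset \<nu> \<inter> Ncoset \<nu>' \<noteq> {}"
  then obtain k k' where "\<theta> powi (int (e1 div 2) * (2 * j \<nu> + 1) + int e2 * k) =
      \<theta> powi (int (e1 div 2) * (2 * j \<nu>' + 1) + int e2 * k')"
    using mem_Ncoset_exponent by (metis disjoint_iff)
  hence "int Q dvd int (2 * (e1 div 2)) * (j \<nu> - j \<nu>') + int e2 * (k - k')"
    unfolding power_int_eq_iff by (simp add: algebra_simps)
  moreover have "2 * (e1 div 2) = e1" using four_dvd_e1 by (auto elim!: dvdE)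
  moreover have "int e2 dvd int Q" using e2_dvd_Q by simp
  ultimately have "int e2 dvd int e1 * (j \<nu> - j \<nu>') + int e2 * (k - k')"
    using dvd_trans by metis
  hence "int e2 dvd int e1 * (j \<nu> - j \<nu>')" by (simp add: dvd_add_left_iff)
  hence "int (e2 div gcd e2 e1) dvd j \<nu> - j \<nu>'" using div_gcd_dvd_of_dvd_mult e2_pos by blast
  thus False using j_dist assms by (simp add: cong_iff_dvd_diff gcd.commute)
qed

text \<open>The cosets are separated 2-adically: \<open>2\<^sup>l\<close> divides \<open>e1\<close>, \<open>e2\<close> and \<open>q - 1\<close>,
  but not the odd multiple \<open>(e1/2)(2j + 1)\<close>.\<close>

lemma Mcoset_Ncoset_disjoint: "Mcoset \<mu> \<inter> Ncoset \<nu> = {}"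
proof (rule ccontr)
  assume "Mcoset \<mu> \<inter> Ncoset \<nu> \<noteq> {}"
  then obtain k k' where "\<theta> powi (int e2 * i \<mu> + int e1 * k) =
      \<theta> powi (int (e1 div 2) * (2 * j \<nu> + 1) + int e2 * k')"
    using mem_Mcoset_exponent mem_Ncoset_exponent by (metis disjoint_iff)
  hence "int Q dvd int e2 * (i \<mu> - k') + int e1 * k - int (e1 div 2) * (2 * j \<nu> + 1)"
    unfolding power_int_eq_iff by (simp add: algebra_simps)
  moreover have "int (2 ^ l) dvd int Q"
    using dvd_trans[OF two_pow_l_dvd_e1 e1_dvd_Q] by (simp only: int_dvd_int_iff)
  ultimately have X: "int (2 ^ l) dvd int e2 * (i \<mu> - k') + int e1 * k - int (e1 div 2) * (2 * j \<nu> + 1)"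
    by (rule dvd_trans[rotated])
  have "int (2 ^ l) dvd int e2 * (i \<mu> - k') + int e1 * k"
    using two_pow_l_dvd_e1 e2_div by (intro dvd_add dvd_mult2) (simp_all only: int_dvd_int_iff)
  from dvd_diff[OF this X] have "int (2 ^ l) dvd int (e1 div 2) * (2 * j \<nu> + 1)" by simp
  moreover have "coprime (int (2 ^ l)) (2 * j \<nu> + 1)" by simp
  ultimately have "int (2 ^ l) dvd int (e1 div 2)" by (simp add: coprime_dvd_mult_left_iff)
  hence "2 ^ l dvd e1 div 2" by (simp only: int_dvd_int_iff)
  thus False using not_two_pow_l_dvd_half_e1 by blast
qed

lemma power_eq_1_if_mem_Mcoset:
  assumes "x \<in> Mcoset \<mu>" "Q dvd e1 * n" "Q dvd e2 * n"
  shows "x ^ n = 1"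
proof -
  obtain y where "y \<in> cyc (\<theta> ^ e1)" "x = (\<theta> ^ e2) powi (i \<mu>) * y"
    using assms(1) unfolding Mcoset_def by blast
  moreover have "(\<theta> ^ e2) powi (i \<mu>) \<in> cyc (\<theta> ^ e2)" unfolding cyc_def by blast
  ultimately show ?thesis using assms(2,3) by (simp add: power_mult_distrib power_eq_1_if_mem_cyc)
qed

lemma power_eq_1_if_mem_Ncoset:
  assumes "x \<in> Ncoset \<nu>" "Q dvd (e1 div 2) * n" "Q dvd e2 * n"
  shows "x ^ n = 1"
proof -
  obtain y where "y \<in> cyc (\<theta> ^ e2)" "x = (\<theta> ^ (e1 div 2)) powi (2 * j \<nu> + 1) * y"
    using assms(1) unfolding Ncoset_def by blast
  moreover have "(\<theta> ^ (e1 div 2)) powi (2 * j \<nu> + 1) \<in> cyc (\<theta> ^ (e1 div 2))"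
    unfolding cyc_def by blast
  ultimately show ?thesis using assms(2,3) by (simp add: power_mult_distrib power_eq_1_if_mem_cyc)
qed

lemma power_half_Q_eq_1_on_union: "x \<in> Mset \<union> Nset \<Longrightarrow> x ^ (Q div 2) = 1"
proof -
  have "even e1" "even e2" "even (e1 div 2)" using four_dvd_e1 four_dvd_e2 by (auto elim!: dvdE)
  thus "x \<in> Mset \<union> Nset \<Longrightarrow> x ^ (Q div 2) = 1" unfolding Mset_def Nset_def
    by (auto intro: power_eq_1_if_mem_Mcoset power_eq_1_if_mem_Ncoset Q_dvd_even_mult_half_Q)
qed

lemma power_f1_Frobenius_fixed: "x \<in> Mset \<union> Nset \<Longrightarrow> (x ^ f1) ^ r = x ^ f1"
proof -
  assume x: "x \<in> Mset \<union> Nset"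
  have "Q dvd e1 * (f1 * (r - 1))" "Q dvd e2 * (f1 * (r - 1))"
    using div2 mult_dvd_mono[of e1 "e2 * (r - 1)" f1 f1] by (simp_all add: Q_eq_e1_f1 mult_ac)
  moreover have "Q dvd (e1 div 2) * (f1 * (r - 1))"
    using four_dvd_e1 odd_r by (auto elim!: dvdE oddE simp: Q_eq_e1_f1 mult_ac)
  ultimately have "x ^ (f1 * (r - 1)) = 1"
    using x unfolding Mset_def Nset_def by (auto intro: power_eq_1_if_mem_Mcoset power_eq_1_if_mem_Ncoset)
  hence "(x ^ f1) ^ (r - 1) = 1" by (simp flip: power_mult)
  thus ?thesis using power_minus_mult[of r "x ^ f1"] r_ge_3 by (metis mult_1 zero_less_numeral less_le_trans)
qed

lemma Mcoset_power_f2_half: "x \<in> Mcoset \<mu> \<Longrightarrow> x ^ (f2 * ((r + 1) div 2)) = 1"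
proof (rule power_eq_1_if_mem_Mcoset)
  show "Q dvd e1 * (f2 * ((r + 1) div 2))" unfolding e1_mult_f2_half_eq by simp
next
  show "Q dvd e2 * (f2 * ((r + 1) div 2))" unfolding Q_eq_e2_f2 mult.assoc[symmetric] by (rule dvd_triv_left)
qed

lemma Ncoset_power_f2_half: "x \<in> Ncoset \<nu> \<Longrightarrow> x ^ (f2 * ((r + 1) div 2)) = (-1) ^ d"
proof -
  let ?n = "f2 * ((r + 1) div 2)" and ?a = "(\<theta> ^ (e1 div 2)) powi (2 * j \<nu> + 1)"
  assume "x \<in> Ncoset \<nu>"
  then obtain y where y: "y \<in> cyc (\<theta> ^ e2)" "x = ?a * y" unfolding Ncoset_def by blast
  have "y ^ ?n = 1" using y(1) by (rule power_eq_1_if_mem_cyc) (simp add: Q_eq_e2_f2)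
  have "2 * ((e1 div 2) * ?n) = 2 * ((Q div 2) * d)"
  proof -
    have "2 * ((e1 div 2) * ?n) = e1 * ?n" using four_dvd_e1 by (auto elim!: dvdE)
    also have "\<dots> = 2 * (Q div 2) * d" unfolding e1_mult_f2_half_eq using even_Q by simp
    finally show ?thesis by (simp only: mult.assoc)
  qed
  hence "int (e1 div 2) * int ?n = int (Q div 2) * int d" by (simp flip: of_nat_mult)
  hence "int (e1 div 2) * (2 * j \<nu> + 1) * int ?n = int (Q div 2) * int d * (2 * j \<nu> + 1)"
    by (metis mult.commute mult.left_commute)
  hence "?a ^ ?n = \<theta> powi (int (Q div 2) * int d * (2 * j \<nu> + 1))"
    by (simp only: power_int_power power_int_power')
  also have "\<dots> = \<theta> powi (int (Q div 2) * int d)"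
  proof -
    have "int (Q div 2) * int d * (2 * j \<nu> + 1) - int (Q div 2) * int d = int Q * (int d * j \<nu>)"
      using even_Q by (auto elim!: evenE simp: algebra_simps)
    thus ?thesis unfolding power_int_eq_iff by simp
  qed
  also have "\<dots> = (-1) ^ d"
    using power_half_Q[OF even_Q] by (simp flip: of_nat_mult add: power_mult)
  finally show ?thesis using y(2) \<open>y ^ ?n = 1\<close> by (simp add: power_mult_distrib)
qed

lemma power_f2_norm_eq_1: "x \<in> Mset \<union> Nset \<Longrightarrow> (x ^ f2) ^ (r + 1) = 1"
proof -
  assume "x \<in> Mset \<union> Nset"
  hence "x ^ (f2 * ((r + 1) div 2)) \<in> {1, (-1) ^ d}"
    unfolding Mset_def Nset_def using Mcoset_power_f2_half Ncoset_power_f2_half by blast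
  moreover have "((-1::'a) ^ d) ^ 2 = 1" by (simp flip: power_mult)
  ultimately have "(x ^ (f2 * ((r + 1) div 2))) ^ 2 = 1" by auto
  moreover have "r + 1 = (r + 1) div 2 * 2" using odd_r by presburger
  ultimately show ?thesis by (metis power_mult)
qed

lemma power_half_prod_Mcoset:
  assumes b: "b \<in> Mset \<union> Nset" and \<mu>: "\<mu> \<in> {1..s}"
  shows "(\<Prod>c\<in>Mcoset \<mu> - {b}. b - c) ^ (Q div 2) = 1"
proof (cases "b \<in> Mcoset \<mu>")
  case True
  show ?thesis
    using power_half_prod_diff_remove_coset[OF _ e1_dvd_Q True[unfolded Mcoset_def]]
      power_half_Q_eq_1_on_union[OF b] primitive_nonzero
    unfolding Mcoset_def by simp
next
  case False
  let ?a = "(\<theta> ^ e2) powi (i \<mu>)"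
  have "(\<Prod>c\<in>Mcoset \<mu> - {b}. b - c) = b ^ f1 - ?a ^ f1"
    using False prod_diff_coset_cyc(1)[of ?a e1 b] primitive_nonzero e1_dvd_Q f1_eq unfolding Mcoset_def by simp
  moreover have "(\<Prod>c\<in>Mcoset \<mu> - {b}. b - c) \<noteq> 0" using False by simp
  moreover have "?a \<in> Mset" using Mcoset_representative \<mu> unfolding Mset_def by blast
  hence "(b ^ f1 - ?a ^ f1) ^ r = b ^ f1 - ?a ^ f1"
    using b by (simp add: power_r_diff power_f1_Frobenius_fixed)
  ultimately show ?thesis by (simp add: power_half_eq_1_if_power_r)
qed

lemma power_half_prod_Ncoset_own:
  assumes b: "b \<in> Ncoset \<nu>" and \<nu>: "\<nu> \<in> {1..t}"
  shows "(\<Prod>c\<in>Ncoset \<nu> - {b}. b - c) ^ (Q div 2) = 1"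
proof -
  have "b \<in> Mset \<union> Nset" using b \<nu> unfolding Nset_def by blast
  thus ?thesis
    using power_half_prod_diff_remove_coset[OF _ e2_dvd_Q b[unfolded Ncoset_def]]
      power_half_Q_eq_1_on_union primitive_nonzero
    unfolding Ncoset_def by simp
qed

lemma power_half_prod_Ncoset_other:
  assumes b: "b \<in> Mset \<union> Nset" and \<nu>: "\<nu> \<in> {1..t}" and "b \<notin> Ncoset \<nu>"
  shows "(\<Prod>c\<in>Ncoset \<nu> - {b}. b - c) ^ (Q div 2) * (b ^ f2) ^ ((r + 1) div 2) =
           (-1) ^ ((r + 1) div 2) * (-1) ^ d"
proof -
  let ?a = "(\<theta> ^ (e1 div 2)) powi (2 * j \<nu> + 1)"
  have eq: "(\<Prod>c\<in>Ncoset \<nu> - {b}. b - c) = b ^ f2 - ?a ^ f2"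
    using assms(3) prod_diff_coset_cyc(1)[of ?a e2 b] primitive_nonzero e2_dvd_Q f2_eq
    unfolding Ncoset_def by simp
  moreover have "(\<Prod>c\<in>Ncoset \<nu> - {b}. b - c) \<noteq> 0" using assms(3) by simp
  ultimately have "b ^ f2 \<noteq> ?a ^ f2" by simp
  moreover have "?a \<in> Mset \<union> Nset" using Ncoset_representative \<nu> unfolding Nset_def by blast
  moreover have "(?a ^ f2) ^ ((r + 1) div 2) = (-1) ^ d"
    using Ncoset_power_f2_half[OF Ncoset_representative] by (simp flip: power_mult)
  ultimately show ?thesis
    using power_half_diff_norm_1[OF power_f2_norm_eq_1[OF b] power_f2_norm_eq_1] eq by simp
qed

lemma L_power_half_split:
  "L (Mset \<union> Nset) b ^ (Q div 2) =
     (\<Prod>\<mu>\<in>{1..s}. (\<Prod>c\<in>Mcoset \<mu> - {b}. b - c) ^ (Q div 2)) *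
     (\<Prod>\<nu>\<in>{1..t}. (\<Prod>c\<in>Ncoset \<nu> - {b}. b - c) ^ (Q div 2))"
proof -
  have split: "Mset \<union> Nset - {b} = (\<Union>\<mu>\<in>{1..s}. Mcoset \<mu> - {b}) \<union> (\<Union>\<nu>\<in>{1..t}. Ncoset \<nu> - {b})"
    unfolding Mset_def Nset_def by blast
  have "L (Mset \<union> Nset) b =
      (\<Prod>c\<in>(\<Union>\<mu>\<in>{1..s}. Mcoset \<mu> - {b}). b - c) * (\<Prod>c\<in>(\<Union>\<nu>\<in>{1..t}. Ncoset \<nu> - {b}). b - c)"
    unfolding L_def split by (rule prod.union_disjoint) (use Mcoset_Ncoset_disjoint in auto)
  also have "(\<Prod>c\<in>(\<Union>\<mu>\<in>{1..s}. Mcoset \<mu> - {b}). b - c) = (\<Prod>\<mu>\<in>{1..s}. \<Prod>c\<in>Mcoset \<mu> - {b}. b - c)"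
  proof (rule prod.UNION_disjoint)
    show "\<forall>\<mu>\<in>{1..s}. \<forall>\<mu>'\<in>{1..s}. \<mu> \<noteq> \<mu>' \<longrightarrow> (Mcoset \<mu> - {b}) \<inter> (Mcoset \<mu>' - {b}) = {}"
      using Mcoset_disjoint by blast
  qed simp_all
  also have "(\<Prod>c\<in>(\<Union>\<nu>\<in>{1..t}. Ncoset \<nu> - {b}). b - c) = (\<Prod>\<nu>\<in>{1..t}. \<Prod>c\<in>Ncoset \<nu> - {b}. b - c)"
  proof (rule prod.UNION_disjoint)
    show "\<forall>\<nu>\<in>{1..t}. \<forall>\<nu>'\<in>{1..t}. \<nu> \<noteq> \<nu>' \<longrightarrow> (Ncoset \<nu> - {b}) \<inter> (Ncoset \<nu>' - {b}) = {}"
      using Ncoset_disjoint by blast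
  qed simp_all
  finally show ?thesis by (simp add: power_mult_distrib prod_power_distrib)
qed

lemma L_power_half_of_mem_Mset:
  assumes b: "b \<in> Mset"
  shows "L (Mset \<union> Nset) b ^ (Q div 2) = (-1) ^ (t * d + t * ((r + 1) div 2))"
proof -
  have "(b ^ f2) ^ ((r + 1) div 2) = 1"
    using b Mcoset_power_f2_half unfolding Mset_def by (auto simp flip: power_mult)
  moreover have "b \<notin> Ncoset \<nu>" for \<nu> using b Mcoset_Ncoset_disjoint unfolding Mset_def by blast
  moreover have "b \<in> Mset \<union> Nset" using b by simp
  ultimately have "(\<Prod>c\<in>Ncoset \<nu> - {b}. b - c) ^ (Q div 2) = (-1) ^ ((r + 1) div 2) * (-1) ^ d"
    if "\<nu> \<in> {1..t}" for \<nu>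
    using power_half_prod_Ncoset_other[OF _ that] by (metis mult_1_right)
  hence "L (Mset \<union> Nset) b ^ (Q div 2) = ((-1) ^ ((r + 1) div 2) * (-1) ^ d) ^ t"
    unfolding L_power_half_split using b power_half_prod_Mcoset by simp
  also have "\<dots> = (-1) ^ (t * d + t * ((r + 1) div 2))"
    by (simp add: power_add power_mult_distrib mult.commute flip: power_mult)
  finally show ?thesis .
qed

lemma L_power_half_of_mem_Nset:
  assumes b: "b \<in> Nset"
  shows "L (Mset \<union> Nset) b ^ (Q div 2) = (-1) ^ ((t - 1) * ((r + 1) div 2))"
proof -
  obtain \<nu>\<^sub>0 where \<nu>\<^sub>0: "\<nu>\<^sub>0 \<in> {1..t}" "b \<in> Ncoset \<nu>\<^sub>0" using b unfolding Nset_def by blast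
  have b_norm: "(b ^ f2) ^ ((r + 1) div 2) = (-1) ^ d"
    using Ncoset_power_f2_half[OF \<nu>\<^sub>0(2)] by (simp flip: power_mult)
  have other: "(\<Prod>c\<in>Ncoset \<nu> - {b}. b - c) ^ (Q div 2) = (-1) ^ ((r + 1) div 2)"
    if "\<nu> \<in> {1..t} - {\<nu>\<^sub>0}" for \<nu>
  proof -
    have "b \<notin> Ncoset \<nu>" using Ncoset_disjoint \<nu>\<^sub>0 that by blast
    thus ?thesis using power_half_prod_Ncoset_other[of b \<nu>] b that b_norm by simp
  qed
  have "(\<Prod>\<nu>\<in>{1..t}. (\<Prod>c\<in>Ncoset \<nu> - {b}. b - c) ^ (Q div 2)) =
      (\<Prod>c\<in>Ncoset \<nu>\<^sub>0 - {b}. b - c) ^ (Q div 2) *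
      (\<Prod>\<nu>\<in>{1..t} - {\<nu>\<^sub>0}. (\<Prod>c\<in>Ncoset \<nu> - {b}. b - c) ^ (Q div 2))"
    using \<nu>\<^sub>0(1) by (simp add: prod.remove)
  also have "\<dots> = ((-1) ^ ((r + 1) div 2)) ^ (t - 1)"
    using power_half_prod_Ncoset_own[OF \<nu>\<^sub>0(2,1)] other \<nu>\<^sub>0(1) by simp
  also have "\<dots> = (-1) ^ ((t - 1) * ((r + 1) div 2))" by (metis power_mult mult.commute)
  finally show ?thesis
    unfolding L_power_half_split using b power_half_prod_Mcoset by simp
qed

end

theorem mainTheorem7:
  fixes \<theta> :: "'a::{finite,field}"
    and r e1 f1 e2 f2 l s t :: nat
    and i j :: "nat \<Rightarrow> int"
  assumes r_pp: "\<exists>p k. prime p \<and> 0 < k \<and> r = p ^ k"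
    and r_odd: "odd r"
    and q_def: "card (UNIV :: 'a set) = r ^ 2"
    and prim: "primitive_elem \<theta>"
    and pos: "0 < e1" "0 < f1" "0 < e2" "0 < f2"
    and fact1: "card (UNIV :: 'a set) - 1 = e1 * f1"
    and fact2: "card (UNIV :: 'a set) - 1 = e2 * f2"
    and l_ge: "2 \<le> l"
    and e1_cong: "[e1 = 2 ^ l] (mod 2 ^ (l + 1))"
    and e2_div: "2 ^ l dvd e2"
    and div1: "2 * e2 dvd e1 * (r + 1)"
    and div2: "e1 dvd e2 * (r - 1)"
    and s_bd: "1 \<le> s" "s \<le> e1 div gcd e1 e2"
    and t_bd: "1 \<le> t" "t \<le> e2 div gcd e1 e2"
    and i_dist: "\<forall>\<mu>\<in>{1..s}. \<forall>\<mu>'\<in>{1..s}. \<mu> \<noteq> \<mu>' \<longrightarrow>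
                   \<not> [i \<mu> = i \<mu>'] (mod int (e1 div gcd e1 e2))"
    and j_dist: "\<forall>\<nu>\<in>{1..t}. \<forall>\<nu>'\<in>{1..t}. \<nu> \<noteq> \<nu>' \<longrightarrow>
                   \<not> [j \<nu> = j \<nu>'] (mod int (e2 div gcd e1 e2))"
  defines "M \<equiv> (\<Union>\<mu>\<in>{1..s}. (\<lambda>a. (\<theta> ^ e2) powi (i \<mu>) * a) ` cyc (\<theta> ^ e1))"
    and "N \<equiv> (\<Union>\<nu>\<in>{1..t}. (\<lambda>b. (\<theta> ^ (e1 div 2)) powi (2 * j \<nu> + 1) * b) ` cyc (\<theta> ^ e2))"
  shows "(\<forall>b\<in>M. eta (L (M \<union> N) b) =
            (-1) ^ (t * (e1 * (r + 1) div (2 * e2)) + t * ((r + 1) div 2)))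
       \<and> (\<forall>b\<in>N. eta (L (M \<union> N) b) = (-1) ^ ((t - 1) * ((r + 1) div 2)))"
proof -
  interpret coset_union_setting \<theta> r e1 f1 e2 f2 l s t i j
    by unfold_locales (fact prim q_def r_odd r_pp fact1 fact2 l_ge e1_cong e2_div div1 div2 i_dist j_dist)+
  have "M = Mset" "N = Nset"
    unfolding M_def N_def Mset_def Nset_def Mcoset_def Ncoset_def by simp_all
  thus ?thesis
    using L_power_half_of_mem_Mset L_power_half_of_mem_Nset eta_eq_neg_one_power[OF even_Q]
    unfolding d_def by simp
qed

end
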